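(* Let $R,LM,C,\widetilde C,Ceq,\widetilde{Ceq}$ be as below, assume all conditions (1.1)–(7b) listed below hold, and let $\sim,\simeq$ be as below. Then for all data in $C,\widetilde C$ (with $n=l(\Gamma_1)=l(\Gamma'_1)$ or $n=l(\Gamma)$): (1) if $(\Gamma_1,T)\sim(\Gamma'_1,T')$ and $(\Gamma_1,\Gamma_2)\sim(\Gamma'_1,\Gamma'_2)$, then $(\Gamma_1,T,t_{n+1}\Gamma_2)\sim(\Gamma'_1,T',t_{n+1}\Gamma'_2)$; (2) if $(\Gamma_1,T)\sim(\Gamma'_1,T')$ and $(\Gamma_1,\Gamma_2\vdash o:S)\simeq(\Gamma'_1,\Gamma'_2\vdash o':S')$, then $(\Gamma_1,T,t_{n+1}\Gamma_2\vdash t_{n+1}o:t_{n+1}S)\simeq(\Gamma'_1,T',t_{n+1}\Gamma'_2\vdash t_{n+1}o':t_{n+1}S')$; (3) if $(\Gamma_1\vdash r:T)\simeq(\Gamma'_1\vdash r':T')$ and $(\Gamma_1,T,\Gamma_2)\sim(\Gamma'_1,T',\Gamma'_2)$, then $(\Gamma_1,s_{n+1}(\Gamma_2[r/n+1]))\sim(\Gamma'_1,s_{n+1}(\Gamma'_2[r'/n+1]))$; (4) if $(\Gamma_1\vdash r:T)\simeq(\Gamma'_1\vdash r':T')$ and $(\Gamma_1,T,\Gamma_2\vdash o:S)\simeq(\Gamma'_1,T',\Gamma'_2\vdash o':S')$, then $(\Gamma_1,s_{n+1}(\Gamma_2[r/n+1])\vdash s_{n+1}(o[r/n+1]):s_{n+1}(S[r/n+1]))\simeq(\Gamma'_1,s_{n+1}(\Gamma'_2[r'/n+1])\vdash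 s_{n+1}(o'[r'/n+1]):s_{n+1}(S'[r'/n+1]))$; (5) if $(\Gamma,T)\sim(\Gamma',T')$, then $(\Gamma,T\vdash n+1:t_{n+1}T)\simeq(\Gamma',T'\vdash n+1:t_{n+1}T')$. Conditions (for all well-formed data, $n=l(\Gamma)$, $i=l(\Gamma_1)$): (1.1) $(\rhd)$; (1.2) $(\Gamma,T\rhd)\Rightarrow(\Gamma\rhd)$; (1.3) $(\Gamma\vdash r:R)\Rightarrow(\Gamma,R\rhd)$; (1.4) $(\Gamma,T\rhd)\wedge(\Gamma,\Delta\vdash r:R)\Rightarrow(\Gamma,T,t_{n+1}\Delta\vdash t_{n+1}r:t_{n+1}R)$; (1.5) $(\Gamma\vdash s:S)\wedge(\Gamma,S,\Delta\vdash r:R)\Rightarrow(\Gamma,s_{n+1}(\Delta[s/n+1])\vdash s_{n+1}(r[s/n+1]):s_{n+1}(R[s/n+1]))$; (1.6) $(\Gamma,T\rhd)\Rightarrow(\Gamma,T\vdash n+1:t_{n+1}T)$; (2a) $(\Gamma\vdash T=T')\Rightarrow(\Gamma,T\rhd)$; (2b) $(\Gamma,T\rhd)\Rightarrow(\Gamma\vdash T=T)$; (2c),(2d) symmetry and transitivity of $(\Gamma\vdash T=T')$; (3a) $(\Gamma\vdash o=o':T)\Rightarrow(\Gamma\vdash o:T)$; (3b) $(\Gamma\vdash o:T)\Rightarrow(\Gamma\vdash o=o:T)$; (3c),(3d) symmetry and transitivity of $(\Gamma\vdash o=o':T)$; (4a) $(\Gamma_1\vdash T=T')\wedge(\Gamma_1,T,\Gamma_2\vdash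 S=S')\Rightarrow(\Gamma_1,T',\Gamma_2\vdash S=S')$; (4b) $(\Gamma_1\vdash T=T')\wedge(\Gamma_1,T,\Gamma_2\vdash o=o':S)\Rightarrow(\Gamma_1,T',\Gamma_2\vdash o=o':S)$; (4c) $(\Gamma\vdash S=S')\wedge(\Gamma\vdash o=o':S)\Rightarrow(\Gamma\vdash o=o':S')$; (5a) $(\Gamma_1,T\rhd)\wedge(\Gamma_1,\Gamma_2\vdash S=S')\Rightarrow(\Gamma_1,T,t_{i+1}\Gamma_2\vdash t_{i+1}S=t_{i+1}S')$; (5b) $(\Gamma_1,T\rhd)\wedge(\Gamma_1,\Gamma_2\vdash o=o':S)\Rightarrow(\Gamma_1,T,t_{i+1}\Gamma_2\vdash t_{i+1}o=t_{i+1}o':t_{i+1}S)$; (6a) $(\Gamma_1,T,\Gamma_2\vdash S=S')\wedge(\Gamma_1\vdash r:T)\Rightarrow(\Gamma_1,s_{i+1}(\Gamma_2[r/i+1])\vdash s_{i+1}(S[r/i+1])=s_{i+1}(S'[r/i+1]))$; (6b) $(\Gamma_1,T,\Gamma_2\vdash o=o':S)\wedge(\Gamma_1\vdash r:T)\Rightarrow(\Gamma_1,s_{i+1}(\Gamma_2[r/i+1])\vdash s_{i+1}(o[r/i+1])=s_{i+1}(o'[r/i+1]):s_{i+1}(S[r/i+1]))$; (7a) $(\Gamma_1,T,\Gamma_2,S\rhd)\wedge(\Gamma_1\vdash r=r':T)\Rightarrow(\Gamma_1,s_{i+1}(\Gamma_2[r/i+1])\vdash s_{i+1}(S[r/i+1])=s_{i+1}(S[r'/i+1]))$;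 (7b) $(\Gamma_1,T,\Gamma_2\vdash o:S)\wedge(\Gamma_1\vdash r=r':T)\Rightarrow(\Gamma_1,s_{i+1}(\Gamma_2[r/i+1])\vdash s_{i+1}(o[r/i+1])=s_{i+1}(o[r'/i+1]):s_{i+1}(S[r/i+1]))$.
   Context: $[n]=\{1,\dots,n\}$. $R$ is a monad on Sets (unit $\eta$, Kleisli extension $\mathrm{bind}$), $LM$ a left $R$-module with action $\rho(f):LM(X)\to LM(Y)$ for $f:X\to R(Y)$. Elements of $Y$ are regarded in $R(Y)$ via $\eta_Y$; $E(f_1/1,\dots,f_m/m)$ is $\rho(f)(E)$ or $\mathrm{bind}(f)(E)$ with $f(i)=f_i$. For $E$ in $LM([m])$ or $R([m])$, $m\ge n$: $t_{n+1}E:=E(1/1,\dots,n/n,n+2/n+1,\dots,m+1/m)$; for $m\ge n+1$, $s\in R([n])$: $s_{n+1}(E[s/n+1]):=E(1/1,\dots,n/n,s/n+1,n+1/n+2,\dots,m-1/m)$; both applied componentwise to sequences. $C,\widetilde C,Ceq,\widetilde{Ceq}$ are subsets of $\coprod_n\prod_{j<n}LM([j])$, $\coprod_n(\prod_{j\le n}LM([j]))\times R([n])$, $\coprod_n(\prod_{j<n}LM([j]))\times LM([n])^2$, $\coprod_n(\prod_{j\le n}LM([j]))\times R([n])^2$. Contexts: $\Gamma=(T_1,\dots,T_n)$, $T_j\in LM([j-1])$, $l(\Gamma)=n$, $ft$ drops the last entry, commas concatenate. $(\Gamma\rhd)$: $\Gamma\in C$; $(\Gamma\vdash t:T)$: $(\Gamma,T,t)\in\widetilde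 C$; $(\Gamma\vdash S=S')$: $(\Gamma,S,S')\in Ceq$; $(\Gamma\vdash o=o':S)$: $(\Gamma,S,o,o')\in\widetilde{Ceq}$. $\sim$ on $C$: $(T_1,\dots,T_n)\sim(T'_1,\dots,T'_n)$ iff $n=0$ or ($ft$'s related and $(T_1,\dots,T_{n-1}\vdash T_n=T'_n)$); different lengths never related. $\simeq$ on $\widetilde C$: $(\Gamma\vdash o:S)\simeq(\Gamma'\vdash o':S')$ iff $(\Gamma,S)\sim(\Gamma',S')$ and $(\Gamma\vdash o=o':S)$. *)

theory Defs
  imports Main
begin

text \<open>Finite ordinals [m] = {1..m}.  The monad R is represented by its values on the
finite ordinals: Rs m is the set R([m]) (inside an ambient type 'r), eta m i is
eta_[m](i) for i in [m], and bind m k f is the Kleisli extension of f : [m] -> R([k]).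
Functions [m] -> R([k]) are represented by functions nat => 'r, only their values on
[m] matter (extensionality axiom).  Likewise Ls m = LM([m]) and rho m k f is the action
rho(f) : LM([m]) -> LM([k]).\<close>

definition fin_monad ::
  "(nat \<Rightarrow> 'r set) \<Rightarrow> (nat \<Rightarrow> nat \<Rightarrow> 'r) \<Rightarrow> (nat \<Rightarrow> nat \<Rightarrow> (nat \<Rightarrow> 'r) \<Rightarrow> 'r \<Rightarrow> 'r) \<Rightarrow> bool" where
  "fin_monad Rs eta bind \<longleftrightarrow>
     (\<forall>m i. i \<in> {1..m} \<longrightarrow> eta m i \<in> Rs m) \<and>
     (\<forall>m k f x. x \<in> Rs m \<and> (\<forall>i\<in>{1..m}. f i \<in> Rs k) \<longrightarrow> bind m k f x \<in> Rs k) \<and>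
     (\<forall>m k f g x. x \<in> Rs m \<and> (\<forall>i\<in>{1..m}. f i = g i) \<longrightarrow> bind m k f x = bind m k g x) \<and>
     (\<forall>m k f i. i \<in> {1..m} \<and> (\<forall>j\<in>{1..m}. f j \<in> Rs k) \<longrightarrow> bind m k f (eta m i) = f i) \<and>
     (\<forall>m x. x \<in> Rs m \<longrightarrow> bind m m (eta m) x = x) \<and>
     (\<forall>m k l f g x. x \<in> Rs m \<and> (\<forall>i\<in>{1..m}. f i \<in> Rs k) \<and> (\<forall>i\<in>{1..k}. g i \<in> Rs l) \<longrightarrow>
        bind k l g (bind m k f x) = bind m l (\<lambda>i. bind k l g (f i)) x)"

definition fin_module ::
  "(nat \<Rightarrow> 'r set) \<Rightarrow> (nat \<Rightarrow> nat \<Rightarrow> 'r) \<Rightarrow> (nat \<Rightarrow> nat \<Rightarrow> (nat \<Rightarrow> 'r) \<Rightarrow> 'r \<Rightarrow> 'r)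
   \<Rightarrow> (nat \<Rightarrow> 'l set) \<Rightarrow> (nat \<Rightarrow> nat \<Rightarrow> (nat \<Rightarrow> 'r) \<Rightarrow> 'l \<Rightarrow> 'l) \<Rightarrow> bool" where
  "fin_module Rs eta bind Ls rho \<longleftrightarrow>
     (\<forall>m k f E. E \<in> Ls m \<and> (\<forall>i\<in>{1..m}. f i \<in> Rs k) \<longrightarrow> rho m k f E \<in> Ls k) \<and>
     (\<forall>m k f g E. E \<in> Ls m \<and> (\<forall>i\<in>{1..m}. f i = g i) \<longrightarrow> rho m k f E = rho m k g E) \<and>
     (\<forall>m E. E \<in> Ls m \<longrightarrow> rho m m (eta m) E = E) \<and>
     (\<forall>m k l f g E. E \<in> Ls m \<and> (\<forall>i\<in>{1..m}. f i \<in> Rs k) \<and> (\<forall>i\<in>{1..k}. g i \<in> Rs l) \<longrightarrow>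
        rho k l g (rho m k f E) = rho m l (\<lambda>i. bind k l g (f i)) E)"

text \<open>Well-formed sequences (T_1,...,T_n) with T_j in LM([j-1]); lists are 0-indexed.\<close>
definition wf_seq :: "(nat \<Rightarrow> 'l set) \<Rightarrow> 'l list \<Rightarrow> bool" where
  "wf_seq Ls G \<longleftrightarrow> (\<forall>j<length G. G ! j \<in> Ls j)"

text \<open>t_{n+1} on E in LM([m]) / R([m]), m >= n: E(1/1,...,n/n,n+2/n+1,...,m+1/m).\<close>
definition wkL :: "(nat \<Rightarrow> nat \<Rightarrow> (nat \<Rightarrow> 'r) \<Rightarrow> 'l \<Rightarrow> 'l) \<Rightarrow> (nat \<Rightarrow> nat \<Rightarrow> 'r) \<Rightarrow> nat \<Rightarrow> nat \<Rightarrow> 'l \<Rightarrow> 'l" where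
  "wkL rho eta n m E = rho m (Suc m) (\<lambda>i. eta (Suc m) (if i \<le> n then i else Suc i)) E"

definition wkR :: "(nat \<Rightarrow> nat \<Rightarrow> (nat \<Rightarrow> 'r) \<Rightarrow> 'r \<Rightarrow> 'r) \<Rightarrow> (nat \<Rightarrow> nat \<Rightarrow> 'r) \<Rightarrow> nat \<Rightarrow> nat \<Rightarrow> 'r \<Rightarrow> 'r" where
  "wkR bind eta n m x = bind m (Suc m) (\<lambda>i. eta (Suc m) (if i \<le> n then i else Suc i)) x"

text \<open>t_{n+1} applied componentwise to a sequence Delta = (D_{n+1},...) whose j-th entry
(0-indexed) lies in LM([n+j]).\<close>
definition wkC :: "(nat \<Rightarrow> nat \<Rightarrow> (nat \<Rightarrow> 'r) \<Rightarrow> 'l \<Rightarrow> 'l) \<Rightarrow> (nat \<Rightarrow> nat \<Rightarrow> 'r) \<Rightarrow> nat \<Rightarrow> 'l list \<Rightarrow> 'l list" where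
  "wkC rho eta n D = map (\<lambda>j. wkL rho eta n (n + j) (D ! j)) [0..<length D]"

text \<open>s_{n+1}(E[s/n+1]) for E in LM([m]) / R([m]), m >= n+1, s in R([n]):
E(1/1,...,n/n,s/n+1,n+1/n+2,...,m-1/m); s is regarded in R([m-1]) via the inclusion
[n] into [m-1], i.e. as bind n (m-1) (eta (m-1)) s.\<close>
definition sbF :: "(nat \<Rightarrow> nat \<Rightarrow> (nat \<Rightarrow> 'r) \<Rightarrow> 'r \<Rightarrow> 'r) \<Rightarrow> (nat \<Rightarrow> nat \<Rightarrow> 'r) \<Rightarrow> nat \<Rightarrow> nat \<Rightarrow> 'r \<Rightarrow> nat \<Rightarrow> 'r" where
  "sbF bind eta n m s i =
     (if i \<le> n then eta (m - 1) i
      else if i = Suc n then bind n (m - 1) (eta (m - 1)) s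
      else eta (m - 1) (i - 1))"

definition sbL :: "(nat \<Rightarrow> nat \<Rightarrow> (nat \<Rightarrow> 'r) \<Rightarrow> 'l \<Rightarrow> 'l) \<Rightarrow> (nat \<Rightarrow> nat \<Rightarrow> (nat \<Rightarrow> 'r) \<Rightarrow> 'r \<Rightarrow> 'r) \<Rightarrow> (nat \<Rightarrow> nat \<Rightarrow> 'r)
    \<Rightarrow> nat \<Rightarrow> nat \<Rightarrow> 'r \<Rightarrow> 'l \<Rightarrow> 'l" where
  "sbL rho bind eta n m s E = rho m (m - 1) (sbF bind eta n m s) E"

definition sbR :: "(nat \<Rightarrow> nat \<Rightarrow> (nat \<Rightarrow> 'r) \<Rightarrow> 'r \<Rightarrow> 'r) \<Rightarrow> (nat \<Rightarrow> nat \<Rightarrow> 'r)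
    \<Rightarrow> nat \<Rightarrow> nat \<Rightarrow> 'r \<Rightarrow> 'r \<Rightarrow> 'r" where
  "sbR bind eta n m s x = bind m (m - 1) (sbF bind eta n m s) x"

text \<open>s_{n+1}(Delta[s/n+1]) componentwise; the j-th entry (0-indexed) of Delta lies in
LM([n+1+j]).\<close>
definition sbC :: "(nat \<Rightarrow> nat \<Rightarrow> (nat \<Rightarrow> 'r) \<Rightarrow> 'l \<Rightarrow> 'l) \<Rightarrow> (nat \<Rightarrow> nat \<Rightarrow> (nat \<Rightarrow> 'r) \<Rightarrow> 'r \<Rightarrow> 'r) \<Rightarrow> (nat \<Rightarrow> nat \<Rightarrow> 'r)
    \<Rightarrow> nat \<Rightarrow> 'r \<Rightarrow> 'l list \<Rightarrow> 'l list" where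
  "sbC rho bind eta n s D = map (\<lambda>j. sbL rho bind eta n (Suc n + j) s (D ! j)) [0..<length D]"

inductive ctx_rel :: "('l list \<times> 'l \<times> 'l) set \<Rightarrow> 'l list \<Rightarrow> 'l list \<Rightarrow> bool" for Ceq where
  nil: "ctx_rel Ceq [] []"
| snoc: "ctx_rel Ceq G G' \<Longrightarrow> (G, T, T') \<in> Ceq \<Longrightarrow> ctx_rel Ceq (G @ [T]) (G' @ [T'])"

definition ctx_sim :: "'l list set \<Rightarrow> ('l list \<times> 'l \<times> 'l) set \<Rightarrow> 'l list \<Rightarrow> 'l list \<Rightarrow> bool" where
  "ctx_sim C Ceq G G' \<longleftrightarrow> G \<in> C \<and> G' \<in> C \<and> ctx_rel Ceq G G'"

definition tm_sim :: "'l list set \<Rightarrow> ('l list \<times> 'l \<times> 'r) set \<Rightarrow> ('l list \<times> 'l \<times> 'l) set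
    \<Rightarrow> ('l list \<times> 'l \<times> 'r \<times> 'r) set \<Rightarrow> 'l list \<Rightarrow> 'l \<Rightarrow> 'r \<Rightarrow> 'l list \<Rightarrow> 'l \<Rightarrow> 'r \<Rightarrow> bool" where
  "tm_sim C Ct Ceq Cteq G S u G' S' u' \<longleftrightarrow>
     (G, S, u) \<in> Ct \<and> (G', S', u') \<in> Ct \<and>
     ctx_sim C Ceq (G @ [S]) (G' @ [S']) \<and> (G, S, u, u') \<in> Cteq"

end

theory Submission
  imports Defs
begin

text \<open>Weakening and substitution act on a context entry by entry, so each context clause is
an induction along the appended part Gamma_2: a pointwise derivation of Gamma_2 ~ Gamma_2'
is transported by the congruence rules (5a) resp. (6a). For substitution of two related
terms r ~ r' one substitutes r on both sides by (6a), then replaces r by r' on the right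
by (7a), and glues the two by transitivity (2d). The term clauses follow from the context
clauses applied to Gamma_2 extended by S, together with (1.4)/(1.5) and (5b)/(6b)/(7b).\<close>

lemma wkC_Nil [simp]: "wkC rho eta n [] = []"
  by (simp add: wkC_def)

lemma wkC_snoc [simp]:
  "wkC rho eta n (D @ [R]) = wkC rho eta n D @ [wkL rho eta n (n + length D) R]"
  by (simp add: wkC_def nth_append)

lemma sbC_Nil [simp]: "sbC rho bind eta n s [] = []"
  by (simp add: sbC_def)

lemma sbC_snoc [simp]:
  "sbC rho bind eta n s (D @ [R]) = sbC rho bind eta n s D @ [sbL rho bind eta n (Suc n + length D) s R]"
  by (simp add: sbC_def nth_append)

lemma ctx_rel_length: "ctx_rel Ceq G G' \<Longrightarrow> length G = length G'"
  by (induction rule: ctx_rel.induct) auto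

lemma ctx_rel_snoc_iff:
  "ctx_rel Ceq (A @ [x]) (B @ [y]) \<longleftrightarrow> ctx_rel Ceq A B \<and> (A, x, y) \<in> Ceq"
  by (auto intro: ctx_rel.snoc elim: ctx_rel.cases)

lemma ctx_rel_append_induct [consumes 2, case_names Nil snoc]:
  assumes "ctx_rel Ceq (A @ D) (A' @ D')" "length A = length A'"
    and Nil: "ctx_rel Ceq A A' \<Longrightarrow> P [] []"
    and snoc: "\<And>D D' R R'. ctx_rel Ceq (A @ D) (A' @ D') \<Longrightarrow> (A @ D, R, R') \<in> Ceq \<Longrightarrow>
        P D D' \<Longrightarrow> P (D @ [R]) (D' @ [R'])"
  shows "P D D'"
  using assms(1)
proof (induction D arbitrary: D' rule: rev_induct)
  case Nil
  then have "D' = []"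
    using ctx_rel_length assms(2) by fastforce
  with Nil show ?case
    using assms(3) by simp
next
  case (snoc R D)
  then have "D' \<noteq> []"
    using ctx_rel_length assms(2) by fastforce
  then obtain D0' R' where D': "D' = D0' @ [R']"
    by (metis rev_exhaust)
  with snoc.prems have "ctx_rel Ceq (A @ D) (A' @ D0')" "(A @ D, R, R') \<in> Ceq"
    using ctx_rel_snoc_iff[of Ceq "A @ D" R "A' @ D0'" R'] by auto
  with snoc.IH show ?case
    unfolding D' by (blast intro: assms(4))
qed

locale judgement_system =
  fixes rho :: "nat \<Rightarrow> nat \<Rightarrow> (nat \<Rightarrow> 'r) \<Rightarrow> 'l \<Rightarrow> 'l"
    and bind :: "nat \<Rightarrow> nat \<Rightarrow> (nat \<Rightarrow> 'r) \<Rightarrow> 'r \<Rightarrow> 'r"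
    and eta :: "nat \<Rightarrow> nat \<Rightarrow> 'r"
    and C :: "'l list set" and Ct :: "('l list \<times> 'l \<times> 'r) set"
    and Ceq :: "('l list \<times> 'l \<times> 'l) set" and Cteq :: "('l list \<times> 'l \<times> 'r \<times> 'r) set"
  assumes c1_2: "\<And>G T. G @ [T] \<in> C \<Longrightarrow> G \<in> C"
    and c1_3: "\<And>G r R. (G, R, r) \<in> Ct \<Longrightarrow> G @ [R] \<in> C"
    and c1_4: "\<And>G T D r R. G @ [T] \<in> C \<Longrightarrow> (G @ D, R, r) \<in> Ct \<Longrightarrow>
        (G @ [T] @ wkC rho eta (length G) D, wkL rho eta (length G) (length G + length D) R,
         wkR bind eta (length G) (length G + length D) r) \<in> Ct"
    and c1_5: "\<And>G s S D r R. (G, S, s) \<in> Ct \<Longrightarrow> (G @ [S] @ D, R, r) \<in> Ct \<Longrightarrow>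
        (G @ sbC rho bind eta (length G) s D, sbL rho bind eta (length G) (Suc (length G) + length D) s R,
         sbR bind eta (length G) (Suc (length G) + length D) s r) \<in> Ct"
    and c1_6: "\<And>G T. G @ [T] \<in> C \<Longrightarrow>
        (G @ [T], wkL rho eta (length G) (length G) T, eta (Suc (length G)) (Suc (length G))) \<in> Ct"
    and c2a: "\<And>G T T'. (G, T, T') \<in> Ceq \<Longrightarrow> G @ [T] \<in> C"
    and c2b: "\<And>G T. G @ [T] \<in> C \<Longrightarrow> (G, T, T) \<in> Ceq"
    and c2c: "\<And>G T T'. (G, T, T') \<in> Ceq \<Longrightarrow> (G, T', T) \<in> Ceq"
    and c2d: "\<And>G T T' T''. (G, T, T') \<in> Ceq \<Longrightarrow> (G, T', T'') \<in> Ceq \<Longrightarrow> (G, T, T'') \<in> Ceq"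
    and c3a: "\<And>G T u u'. (G, T, u, u') \<in> Cteq \<Longrightarrow> (G, T, u) \<in> Ct"
    and c3b: "\<And>G T u. (G, T, u) \<in> Ct \<Longrightarrow> (G, T, u, u) \<in> Cteq"
    and c3c: "\<And>G T u u'. (G, T, u, u') \<in> Cteq \<Longrightarrow> (G, T, u', u) \<in> Cteq"
    and c3d: "\<And>G T u u' u''. (G, T, u, u') \<in> Cteq \<Longrightarrow> (G, T, u', u'') \<in> Cteq \<Longrightarrow> (G, T, u, u'') \<in> Cteq"
    and c5a: "\<And>G1 T G2 S S'. G1 @ [T] \<in> C \<Longrightarrow> (G1 @ G2, S, S') \<in> Ceq \<Longrightarrow>
        (G1 @ [T] @ wkC rho eta (length G1) G2,
         wkL rho eta (length G1) (length G1 + length G2) S,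
         wkL rho eta (length G1) (length G1 + length G2) S') \<in> Ceq"
    and c5b: "\<And>G1 T G2 S u u'. G1 @ [T] \<in> C \<Longrightarrow> (G1 @ G2, S, u, u') \<in> Cteq \<Longrightarrow>
        (G1 @ [T] @ wkC rho eta (length G1) G2,
         wkL rho eta (length G1) (length G1 + length G2) S,
         wkR bind eta (length G1) (length G1 + length G2) u,
         wkR bind eta (length G1) (length G1 + length G2) u') \<in> Cteq"
    and c6a: "\<And>G1 T G2 S S' r. (G1 @ [T] @ G2, S, S') \<in> Ceq \<Longrightarrow> (G1, T, r) \<in> Ct \<Longrightarrow>
        (G1 @ sbC rho bind eta (length G1) r G2,
         sbL rho bind eta (length G1) (Suc (length G1) + length G2) r S,
         sbL rho bind eta (length G1) (Suc (length G1) + length G2) r S') \<in> Ceq"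
    and c6b: "\<And>G1 T G2 S u u' r. (G1 @ [T] @ G2, S, u, u') \<in> Cteq \<Longrightarrow> (G1, T, r) \<in> Ct \<Longrightarrow>
        (G1 @ sbC rho bind eta (length G1) r G2,
         sbL rho bind eta (length G1) (Suc (length G1) + length G2) r S,
         sbR bind eta (length G1) (Suc (length G1) + length G2) r u,
         sbR bind eta (length G1) (Suc (length G1) + length G2) r u') \<in> Cteq"
    and c7a: "\<And>G1 T G2 S r r'. G1 @ [T] @ G2 @ [S] \<in> C \<Longrightarrow> (G1, T, r, r') \<in> Cteq \<Longrightarrow>
        (G1 @ sbC rho bind eta (length G1) r G2,
         sbL rho bind eta (length G1) (Suc (length G1) + length G2) r S,
         sbL rho bind eta (length G1) (Suc (length G1) + length G2) r' S) \<in> Ceq"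
    and c7b: "\<And>G1 T G2 S u r r'. (G1 @ [T] @ G2, S, u) \<in> Ct \<Longrightarrow> (G1, T, r, r') \<in> Cteq \<Longrightarrow>
        (G1 @ sbC rho bind eta (length G1) r G2,
         sbL rho bind eta (length G1) (Suc (length G1) + length G2) r S,
         sbR bind eta (length G1) (Suc (length G1) + length G2) r u,
         sbR bind eta (length G1) (Suc (length G1) + length G2) r' u) \<in> Cteq"
begin

lemma wkC_mem:
  assumes "G1 @ [T] \<in> C" "G1 @ G2 \<in> C"
  shows "G1 @ [T] @ wkC rho eta (length G1) G2 \<in> C"
proof (cases G2 rule: rev_exhaust)
  case (snoc D R)
  with assms have "(G1 @ D, R, R) \<in> Ceq"
    using c2b by simp
  from c2a[OF c5a[OF assms(1) this]] show ?thesis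
    using snoc by simp
qed (use assms in simp)

lemma ctx_rel_wkC:
  assumes "ctx_rel Ceq (G1 @ G2) (G1' @ G2')" "length G1 = length G1'"
    and "G1 @ [T] \<in> C" "ctx_rel Ceq (G1 @ [T]) (G1' @ [T'])"
  shows "ctx_rel Ceq (G1 @ [T] @ wkC rho eta (length G1) G2) (G1' @ [T'] @ wkC rho eta (length G1) G2')"
  using assms(1,2)
proof (induction rule: ctx_rel_append_induct)
  case (snoc D D' R R')
  then have "length D = length D'"
    using ctx_rel_length assms(2) by fastforce
  with snoc ctx_rel.snoc[OF snoc.IH c5a[OF assms(3) snoc(2)]] show ?case
    by (simp add: assms(2))
qed (use assms(4) in simp)

lemma ctx_sim_wkC:
  assumes "length G1 = length G1'" "ctx_sim C Ceq (G1 @ [T]) (G1' @ [T'])"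
    and "ctx_sim C Ceq (G1 @ G2) (G1' @ G2')"
  shows "ctx_sim C Ceq (G1 @ [T] @ wkC rho eta (length G1) G2) (G1' @ [T'] @ wkC rho eta (length G1) G2')"
  using assms wkC_mem[of G1 T G2] wkC_mem[of G1' T' G2'] ctx_rel_wkC[of G1 G2 G1' G2' T T']
  unfolding ctx_sim_def by auto

lemma tm_sim_wk:
  assumes "length G1 = length G1'" "ctx_sim C Ceq (G1 @ [T]) (G1' @ [T'])"
    and "tm_sim C Ct Ceq Cteq (G1 @ G2) S u (G1' @ G2') S' u'"
  defines "n \<equiv> length G1"
  shows "tm_sim C Ct Ceq Cteq
      (G1 @ [T] @ wkC rho eta n G2) (wkL rho eta n (n + length G2) S) (wkR bind eta n (n + length G2) u)
      (G1' @ [T'] @ wkC rho eta n G2') (wkL rho eta n (n + length G2') S') (wkR bind eta n (n + length G2') u')"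
proof -
  from assms(3) have u: "(G1 @ G2, S, u) \<in> Ct" "(G1' @ G2', S', u') \<in> Ct"
      "(G1 @ G2, S, u, u') \<in> Cteq" and ctx: "ctx_sim C Ceq (G1 @ G2 @ [S]) (G1' @ G2' @ [S'])"
    unfolding tm_sim_def by auto
  have T: "G1 @ [T] \<in> C" "G1' @ [T'] \<in> C"
    using assms(2) unfolding ctx_sim_def by auto
  have "length G2 = length G2'"
    using ctx assms(1) ctx_rel_length unfolding ctx_sim_def by fastforce
  moreover have "ctx_sim C Ceq (G1 @ [T] @ wkC rho eta n (G2 @ [S])) (G1' @ [T'] @ wkC rho eta n (G2' @ [S']))"
    using ctx_sim_wkC[OF assms(1,2), of "G2 @ [S]" "G2' @ [S']"] ctx by (simp add: n_def)
  ultimately show ?thesis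
    unfolding tm_sim_def n_def
    using c1_4[OF T(1) u(1)] c1_4[OF T(2) u(2)] c5b[OF T(1) u(3)] assms(1) by simp
qed

lemma sbC_mem:
  assumes "(G1, T, r) \<in> Ct" "G1 @ [T] @ G2 \<in> C"
  shows "G1 @ sbC rho bind eta (length G1) r G2 \<in> C"
proof (cases G2 rule: rev_exhaust)
  case (snoc D R)
  with assms have "(G1 @ [T] @ D, R, R) \<in> Ceq"
    using c2b by simp
  from c2a[OF c6a[OF this assms(1)]] show ?thesis
    using snoc by simp
qed (use assms c1_2 in simp)

lemma ctx_rel_sbC:
  assumes "ctx_rel Ceq (G1 @ [T] @ G2) (G1' @ [T'] @ G2')" "length G1 = length G1'"
    and "(G1, T, r, r') \<in> Cteq"
  shows "ctx_rel Ceq (G1 @ sbC rho bind eta (length G1) r G2) (G1' @ sbC rho bind eta (length G1) r' G2')"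
proof -
  have r: "(G1, T, r) \<in> Ct"
    using c3a[OF assms(3)] .
  have "ctx_rel Ceq ((G1 @ [T]) @ G2) ((G1' @ [T']) @ G2')" "length (G1 @ [T]) = length (G1' @ [T'])"
    using assms(1,2) by simp_all
  then show ?thesis
  proof (induction rule: ctx_rel_append_induct)
    case Nil
    then show ?case
      by (simp add: ctx_rel_snoc_iff)
  next
    case (snoc D D' R R')
    then have "length D = length D'"
      using ctx_rel_length assms(2) by fastforce
    \<comment> \<open>substitute r into both R and R', then replace r by r' in R'\<close>
    have R: "(G1 @ [T] @ D, R, R') \<in> Ceq"
      using snoc(2) by simp
    have "G1 @ [T] @ D @ [R'] \<in> C"
      using c2a[OF c2c[OF R]] by simp
    from c2d[OF c6a[OF R r] c7a[OF this assms(3)]]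
    have "(G1 @ sbC rho bind eta (length G1) r D,
          sbL rho bind eta (length G1) (Suc (length G1) + length D) r R,
          sbL rho bind eta (length G1) (Suc (length G1) + length D) r' R') \<in> Ceq" .
    from ctx_rel.snoc[OF snoc.IH this] show ?case
      using \<open>length D = length D'\<close> by (simp add: assms(2))
  qed
qed

lemma ctx_sim_sbC:
  assumes "length G1 = length G1'" "tm_sim C Ct Ceq Cteq G1 T r G1' T' r'"
    and "ctx_sim C Ceq (G1 @ [T] @ G2) (G1' @ [T'] @ G2')"
  shows "ctx_sim C Ceq (G1 @ sbC rho bind eta (length G1) r G2) (G1' @ sbC rho bind eta (length G1) r' G2')"
proof -
  from assms(2) have "(G1, T, r) \<in> Ct" "(G1', T', r') \<in> Ct" "(G1, T, r, r') \<in> Cteq"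
    unfolding tm_sim_def by auto
  then show ?thesis
    using assms(1,3) sbC_mem[of G1 T r G2] sbC_mem[of G1' T' r' G2'] ctx_rel_sbC[of G1 T G2 G1' T' G2' r r']
    unfolding ctx_sim_def by auto
qed

lemma tm_sim_sb:
  assumes "length G1 = length G1'" "tm_sim C Ct Ceq Cteq G1 T r G1' T' r'"
    and "tm_sim C Ct Ceq Cteq (G1 @ [T] @ G2) S u (G1' @ [T'] @ G2') S' u'"
  defines "n \<equiv> length G1"
  shows "tm_sim C Ct Ceq Cteq
      (G1 @ sbC rho bind eta n r G2) (sbL rho bind eta n (Suc n + length G2) r S)
        (sbR bind eta n (Suc n + length G2) r u)
      (G1' @ sbC rho bind eta n r' G2') (sbL rho bind eta n (Suc n + length G2') r' S')
        (sbR bind eta n (Suc n + length G2') r' u')"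
proof -
  from assms(3) have u: "(G1 @ [T] @ G2, S, u) \<in> Ct" "(G1' @ [T'] @ G2', S', u') \<in> Ct"
      "(G1 @ [T] @ G2, S, u, u') \<in> Cteq"
    and ctx: "ctx_sim C Ceq (G1 @ [T] @ G2 @ [S]) (G1' @ [T'] @ G2' @ [S'])"
    unfolding tm_sim_def by auto
  from assms(2) have r: "(G1, T, r) \<in> Ct" "(G1', T', r') \<in> Ct" "(G1, T, r, r') \<in> Cteq"
    unfolding tm_sim_def by auto
  have "length G2 = length G2'"
    using ctx assms(1) ctx_rel_length unfolding ctx_sim_def by fastforce
  moreover have "ctx_sim C Ceq (G1 @ sbC rho bind eta n r (G2 @ [S])) (G1' @ sbC rho bind eta n r' (G2' @ [S']))"
    using ctx_sim_sbC[OF assms(1,2), of "G2 @ [S]" "G2' @ [S']"] ctx by (simp add: n_def)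
  \<comment> \<open>as for contexts: substitute r into u and u', then replace r by r' in u'\<close>
  moreover have "(G1 @ [T] @ G2, S, u') \<in> Ct"
    using c3a[OF c3c[OF u(3)]] .
  note c3d[OF c6b[OF u(3) r(1)] c7b[OF this r(3)]]
  ultimately show ?thesis
    unfolding tm_sim_def n_def
    using c1_5[OF r(1) u(1)] c1_5[OF r(2) u(2)] assms(1) by simp
qed

lemma tm_sim_var:
  assumes "length G = length G'" "ctx_sim C Ceq (G @ [T]) (G' @ [T'])"
  defines "n \<equiv> length G"
  shows "tm_sim C Ct Ceq Cteq
      (G @ [T]) (wkL rho eta n n T) (eta (Suc n) (Suc n))
      (G' @ [T']) (wkL rho eta n n T') (eta (Suc n) (Suc n))"
proof -
  from assms(2) have T: "G @ [T] \<in> C" "G' @ [T'] \<in> C" and rel: "ctx_rel Ceq (G @ [T]) (G' @ [T'])"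
    unfolding ctx_sim_def by auto
  have var: "(G @ [T], wkL rho eta n n T, eta (Suc n) (Suc n)) \<in> Ct"
      "(G' @ [T'], wkL rho eta n n T', eta (Suc n) (Suc n)) \<in> Ct"
    using c1_6[OF T(1)] c1_6[OF T(2)] assms(1) by (simp_all add: n_def)
  have "(G @ [T], wkL rho eta n n T, wkL rho eta n n T') \<in> Ceq"
    using c5a[OF T(1), of "[]"] rel by (simp add: n_def ctx_rel_snoc_iff)
  then show ?thesis
    unfolding tm_sim_def ctx_sim_def
    using var c1_3[OF var(1)] c1_3[OF var(2)] ctx_rel.snoc[OF rel] c3b[OF var(1)] by simp
qed

end

theorem lemma6p6:
  fixes Rs :: "nat \<Rightarrow> 'r set" and eta :: "nat \<Rightarrow> nat \<Rightarrow> 'r"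
    and bind :: "nat \<Rightarrow> nat \<Rightarrow> (nat \<Rightarrow> 'r) \<Rightarrow> 'r \<Rightarrow> 'r"
    and Ls :: "nat \<Rightarrow> 'l set" and rho :: "nat \<Rightarrow> nat \<Rightarrow> (nat \<Rightarrow> 'r) \<Rightarrow> 'l \<Rightarrow> 'l"
    and C :: "'l list set" and Ct :: "('l list \<times> 'l \<times> 'r) set"
    and Ceq :: "('l list \<times> 'l \<times> 'l) set" and Cteq :: "('l list \<times> 'l \<times> 'r \<times> 'r) set"
  assumes monad: "fin_monad Rs eta bind"
    and module: "fin_module Rs eta bind Ls rho"
    and C_sub: "C \<subseteq> {G. wf_seq Ls G}"
    and Ct_sub: "Ct \<subseteq> {(G, T, t). wf_seq Ls (G @ [T]) \<and> t \<in> Rs (length G)}"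
    and Ceq_sub: "Ceq \<subseteq> {(G, S, S'). wf_seq Ls (G @ [S]) \<and> S' \<in> Ls (length G)}"
    and Cteq_sub: "Cteq \<subseteq> {(G, S, u, u'). wf_seq Ls (G @ [S]) \<and> u \<in> Rs (length G) \<and> u' \<in> Rs (length G)}"
    and c1_1: "[] \<in> C"
    and c1_2: "\<And>G T. G @ [T] \<in> C \<Longrightarrow> G \<in> C"
    and c1_3: "\<And>G r R. (G, R, r) \<in> Ct \<Longrightarrow> G @ [R] \<in> C"
    and c1_4: "\<And>G T D r R. G @ [T] \<in> C \<Longrightarrow> (G @ D, R, r) \<in> Ct \<Longrightarrow>
        (G @ [T] @ wkC rho eta (length G) D, wkL rho eta (length G) (length G + length D) R,
         wkR bind eta (length G) (length G + length D) r) \<in> Ct"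
    and c1_5: "\<And>G s S D r R. (G, S, s) \<in> Ct \<Longrightarrow> (G @ [S] @ D, R, r) \<in> Ct \<Longrightarrow>
        (G @ sbC rho bind eta (length G) s D, sbL rho bind eta (length G) (Suc (length G) + length D) s R,
         sbR bind eta (length G) (Suc (length G) + length D) s r) \<in> Ct"
    and c1_6: "\<And>G T. G @ [T] \<in> C \<Longrightarrow>
        (G @ [T], wkL rho eta (length G) (length G) T, eta (Suc (length G)) (Suc (length G))) \<in> Ct"
    and c2a: "\<And>G T T'. (G, T, T') \<in> Ceq \<Longrightarrow> G @ [T] \<in> C"
    and c2b: "\<And>G T. G @ [T] \<in> C \<Longrightarrow> (G, T, T) \<in> Ceq"
    and c2c: "\<And>G T T'. (G, T, T') \<in> Ceq \<Longrightarrow> (G, T', T) \<in> Ceq"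
    and c2d: "\<And>G T T' T''. (G, T, T') \<in> Ceq \<Longrightarrow> (G, T', T'') \<in> Ceq \<Longrightarrow> (G, T, T'') \<in> Ceq"
    and c3a: "\<And>G T u u'. (G, T, u, u') \<in> Cteq \<Longrightarrow> (G, T, u) \<in> Ct"
    and c3b: "\<And>G T u. (G, T, u) \<in> Ct \<Longrightarrow> (G, T, u, u) \<in> Cteq"
    and c3c: "\<And>G T u u'. (G, T, u, u') \<in> Cteq \<Longrightarrow> (G, T, u', u) \<in> Cteq"
    and c3d: "\<And>G T u u' u''. (G, T, u, u') \<in> Cteq \<Longrightarrow> (G, T, u', u'') \<in> Cteq \<Longrightarrow> (G, T, u, u'') \<in> Cteq"
    and c4a: "\<And>G1 T T' G2 S S'. (G1, T, T') \<in> Ceq \<Longrightarrow> (G1 @ [T] @ G2, S, S') \<in> Ceq \<Longrightarrow>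
        (G1 @ [T'] @ G2, S, S') \<in> Ceq"
    and c4b: "\<And>G1 T T' G2 S u u'. (G1, T, T') \<in> Ceq \<Longrightarrow> (G1 @ [T] @ G2, S, u, u') \<in> Cteq \<Longrightarrow>
        (G1 @ [T'] @ G2, S, u, u') \<in> Cteq"
    and c4c: "\<And>G S S' u u'. (G, S, S') \<in> Ceq \<Longrightarrow> (G, S, u, u') \<in> Cteq \<Longrightarrow> (G, S', u, u') \<in> Cteq"
    and c5a: "\<And>G1 T G2 S S'. G1 @ [T] \<in> C \<Longrightarrow> (G1 @ G2, S, S') \<in> Ceq \<Longrightarrow>
        (G1 @ [T] @ wkC rho eta (length G1) G2,
         wkL rho eta (length G1) (length G1 + length G2) S,
         wkL rho eta (length G1) (length G1 + length G2) S') \<in> Ceq"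
    and c5b: "\<And>G1 T G2 S u u'. G1 @ [T] \<in> C \<Longrightarrow> (G1 @ G2, S, u, u') \<in> Cteq \<Longrightarrow>
        (G1 @ [T] @ wkC rho eta (length G1) G2,
         wkL rho eta (length G1) (length G1 + length G2) S,
         wkR bind eta (length G1) (length G1 + length G2) u,
         wkR bind eta (length G1) (length G1 + length G2) u') \<in> Cteq"
    and c6a: "\<And>G1 T G2 S S' r. (G1 @ [T] @ G2, S, S') \<in> Ceq \<Longrightarrow> (G1, T, r) \<in> Ct \<Longrightarrow>
        (G1 @ sbC rho bind eta (length G1) r G2,
         sbL rho bind eta (length G1) (Suc (length G1) + length G2) r S,
         sbL rho bind eta (length G1) (Suc (length G1) + length G2) r S') \<in> Ceq"
    and c6b: "\<And>G1 T G2 S u u' r. (G1 @ [T] @ G2, S, u, u') \<in> Cteq \<Longrightarrow> (G1, T, r) \<in> Ct \<Longrightarrow>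
        (G1 @ sbC rho bind eta (length G1) r G2,
         sbL rho bind eta (length G1) (Suc (length G1) + length G2) r S,
         sbR bind eta (length G1) (Suc (length G1) + length G2) r u,
         sbR bind eta (length G1) (Suc (length G1) + length G2) r u') \<in> Cteq"
    and c7a: "\<And>G1 T G2 S r r'. G1 @ [T] @ G2 @ [S] \<in> C \<Longrightarrow> (G1, T, r, r') \<in> Cteq \<Longrightarrow>
        (G1 @ sbC rho bind eta (length G1) r G2,
         sbL rho bind eta (length G1) (Suc (length G1) + length G2) r S,
         sbL rho bind eta (length G1) (Suc (length G1) + length G2) r' S) \<in> Ceq"
    and c7b: "\<And>G1 T G2 S u r r'. (G1 @ [T] @ G2, S, u) \<in> Ct \<Longrightarrow> (G1, T, r, r') \<in> Cteq \<Longrightarrow>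
        (G1 @ sbC rho bind eta (length G1) r G2,
         sbL rho bind eta (length G1) (Suc (length G1) + length G2) r S,
         sbR bind eta (length G1) (Suc (length G1) + length G2) r u,
         sbR bind eta (length G1) (Suc (length G1) + length G2) r' u) \<in> Cteq"
  shows
    "(\<forall>n G1 G1' T T' G2 G2'. length G1 = n \<and> length G1' = n \<and>
        ctx_sim C Ceq (G1 @ [T]) (G1' @ [T']) \<and> ctx_sim C Ceq (G1 @ G2) (G1' @ G2') \<longrightarrow>
        ctx_sim C Ceq (G1 @ [T] @ wkC rho eta n G2) (G1' @ [T'] @ wkC rho eta n G2'))
   \<and> (\<forall>n G1 G1' T T' G2 G2' S S' u u'. length G1 = n \<and> length G1' = n \<and>
        ctx_sim C Ceq (G1 @ [T]) (G1' @ [T']) \<and>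
        tm_sim C Ct Ceq Cteq (G1 @ G2) S u (G1' @ G2') S' u' \<longrightarrow>
        tm_sim C Ct Ceq Cteq
          (G1 @ [T] @ wkC rho eta n G2) (wkL rho eta n (n + length G2) S) (wkR bind eta n (n + length G2) u)
          (G1' @ [T'] @ wkC rho eta n G2') (wkL rho eta n (n + length G2') S') (wkR bind eta n (n + length G2') u'))
   \<and> (\<forall>n G1 G1' T T' r r' G2 G2'. length G1 = n \<and> length G1' = n \<and>
        tm_sim C Ct Ceq Cteq G1 T r G1' T' r' \<and>
        ctx_sim C Ceq (G1 @ [T] @ G2) (G1' @ [T'] @ G2') \<longrightarrow>
        ctx_sim C Ceq (G1 @ sbC rho bind eta n r G2) (G1' @ sbC rho bind eta n r' G2'))
   \<and> (\<forall>n G1 G1' T T' r r' G2 G2' S S' u u'. length G1 = n \<and> length G1' = n \<and>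
        tm_sim C Ct Ceq Cteq G1 T r G1' T' r' \<and>
        tm_sim C Ct Ceq Cteq (G1 @ [T] @ G2) S u (G1' @ [T'] @ G2') S' u' \<longrightarrow>
        tm_sim C Ct Ceq Cteq
          (G1 @ sbC rho bind eta n r G2) (sbL rho bind eta n (Suc n + length G2) r S)
            (sbR bind eta n (Suc n + length G2) r u)
          (G1' @ sbC rho bind eta n r' G2') (sbL rho bind eta n (Suc n + length G2') r' S')
            (sbR bind eta n (Suc n + length G2') r' u'))
   \<and> (\<forall>n G G' T T'. length G = n \<and> length G' = n \<and>
        ctx_sim C Ceq (G @ [T]) (G' @ [T']) \<longrightarrow>
        tm_sim C Ct Ceq Cteq
          (G @ [T]) (wkL rho eta n n T) (eta (Suc n) (Suc n))
          (G' @ [T']) (wkL rho eta n n T') (eta (Suc n) (Suc n)))"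
proof -
  interpret judgement_system rho bind eta C Ct Ceq Cteq
    by unfold_locales (fact c1_2 c1_3 c1_4 c1_5 c1_6 c2a c2b c2c c2d c3a c3b c3c c3d
        c5a c5b c6a c6b c7a c7b)+
  show ?thesis
    by (intro conjI allI impI; elim conjE; hypsubst;
        rule ctx_sim_wkC tm_sim_wk ctx_sim_sbC tm_sim_sb tm_sim_var; simp)
qed

end
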